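(* Let $\mu$ be as in the context and assume Conditions (C1), (C2) and $\int\log_+\mathcal{N}(a)\,d\mu(a)<\infty$. Then for every $\eta>e^\gamma$ and $\varepsilon>0$ there exist $K\ge1$ and $a_1,\dots,a_K\in\mathrm{supp}(\mu)$ such that $g:=a_1\cdots a_K>0$ and $\|g\|\le\varepsilon\eta^K$; in particular $r(g)\le\varepsilon\eta^K$.
   Context: Notation: $G$ is the set of $d\times d$ nonnegative matrices; $|x|=\sum_i|x_i|$; $\|a\|$ operator norm, $r(a)$ spectral radius; $a>0$ means all entries strictly positive; $\mathbb{S}_+^{d-1}=\{x\in\mathbb{R}_+^d:|x|=1\}$; $\iota(a)=\inf_{x\in\mathbb{S}_+^{d-1}}|ax|$; $\mathcal{N}(a)=\max\{\|a\|,\iota(a)^{-1}\}$; $\log_+y=\max(\log y,0)$. Setting: random $A_i\in G$, $N=\#\{i:A_i\ne0\}<\infty$ a.s., $A_i\ne0$ iff $i\le N$; $\mu$: probability on $G$ with $\int f\,d\mu=\mathbb{E}[\sum_{i\le N}f(A_i)]/\mathbb{E}[N]$; $\Gamma$: multiplicative semigroup (with identity) generated by $\mathrm{supp}(\mu)$. $(M_i)$ i.i.d. of law $\mu$, $G_n=M_1\cdots M_n$, $\gamma=\lim_n\frac1n\mathbb{E}[\log\|G_n\|]$. (C1) $N\ge1$ a.s., $\mathbb{E}[N]\in(1,\infty)$, $A_i\in G$, $A_i\ne0$ iff $i\le N$. (C2) Every $a\in\Gamma$ has a strictly positive entry in each row and column; $\Gamma$ contains a strictly positive matrix. *)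

theory Defs
  imports "HOL-Probability.Probability"
begin

definition l1norm :: "real^'d \<Rightarrow> real" where
  "l1norm x = (\<Sum>i\<in>UNIV. \<bar>x $ i\<bar>)"

definition nonneg_mat :: "real^'d^'d \<Rightarrow> bool" where
  "nonneg_mat a \<longleftrightarrow> (\<forall>i j. a $ i $ j \<ge> 0)"

definition pos_mat :: "real^'d^'d \<Rightarrow> bool" where
  "pos_mat a \<longleftrightarrow> (\<forall>i j. a $ i $ j > 0)"

definition opnorm1 :: "real^'d^'d \<Rightarrow> real" where
  "opnorm1 a = (SUP x\<in>{x. l1norm x = 1}. l1norm (a *v x))"

definition simplex_plus :: "(real^'d) set" where
  "simplex_plus = {x. (\<forall>i. x $ i \<ge> 0) \<and> l1norm x = 1}"

definition iota :: "real^'d^'d \<Rightarrow> real" where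
  "iota a = (INF x\<in>simplex_plus. l1norm (a *v x))"

text \<open>log_+ N(a), with N(a) = max(||a||, iota(a)^-1), where iota(a)^-1 = infinity if iota(a)=0.\<close>
definition logpN :: "real^'d^'d \<Rightarrow> ennreal" where
  "logpN a = (if iota a = 0 then \<infinity>
              else ennreal (max 0 (ln (max (opnorm1 a) (inverse (iota a))))))"

definition cmat :: "real^'d^'d \<Rightarrow> complex^'d^'d" where
  "cmat a = (\<chi> i j. complex_of_real (a $ i $ j))"

definition spectral_radius :: "real^'d^'d \<Rightarrow> real" where
  "spectral_radius a =
     Max {cmod l | l. \<exists>v::complex^'d. v \<noteq> 0 \<and> cmat a *v v = l *s v}"

definition msupp :: "(real^'d^'d) measure \<Rightarrow> (real^'d^'d) set" where
  "msupp mu = {a. \<forall>e>0. emeasure mu (ball a e) > 0}"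

inductive_set gen_semigroup :: "(real^'d^'d) set \<Rightarrow> (real^'d^'d) set" for S where
  one: "mat 1 \<in> gen_semigroup S"
| mult: "g \<in> gen_semigroup S \<Longrightarrow> a \<in> S \<Longrightarrow> g ** a \<in> gen_semigroup S"

text \<open>Ordered product a m * a (m+1) * ... * a (n-1).\<close>
definition mprod :: "(nat \<Rightarrow> real^'d^'d) \<Rightarrow> nat \<Rightarrow> nat \<Rightarrow> real^'d^'d" where
  "mprod a m n = foldr (\<lambda>i acc. a i ** acc) [m..<n] (mat 1)"

definition lyap :: "(real^'d^'d) measure \<Rightarrow> real" where
  "lyap mu = lim (\<lambda>n. (\<integral>x. ln (opnorm1 (mprod x 0 n)) \<partial>(PiM {..<n} (\<lambda>_. mu))) / real n)"

end

theory Submission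
  imports Defs "HOL-Computational_Algebra.Fundamental_Theorem_Algebra"
begin

text \<open>For nonnegative matrices the operator norm is the largest and \<open>\<iota>\<close> the smallest column
  sum. The moment condition therefore makes almost every matrix column-allowable (no zero column)
  with both logarithms integrable, so \<open>s\<^sub>n = E log \<parallel>G\<^sub>n\<parallel>\<close> is subadditive and bounded below by a
  linear function, and Fekete's lemma gives \<open>s\<^sub>n / n \<longrightarrow> \<gamma>\<close>. For \<open>e\<^sup>\<gamma> < \<theta> < \<eta>\<close> some
  \<open>s\<^sub>n\<close> is below \<open>n log \<theta>\<close>, hence some product \<open>h\<close> of \<open>n\<close> matrices from the support has
  \<open>\<parallel>h\<parallel> \<le> \<theta>\<^sup>n\<close>. With a positive \<open>g \<in> \<Gamma>\<close>, the product \<open>g h\<^sup>m g\<close> is positive and has norm at most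
  \<open>\<parallel>g\<parallel>\<^sup>2 \<theta>\<^sup>n\<^sup>m\<close>, which is below \<open>\<epsilon> \<eta>\<^sup>K\<close> for large \<open>m\<close>; the spectral radius is bounded by the
  norm.\<close>

section \<open>Column sums\<close>

definition colsum :: "real^'d^'d \<Rightarrow> 'd \<Rightarrow> real" where
  "colsum a j = (\<Sum>i\<in>UNIV. \<bar>a $ i $ j\<bar>)"

definition max_colsum :: "real^'d^'d \<Rightarrow> real" where
  "max_colsum a = Max (range (colsum a))"

definition min_colsum :: "real^'d^'d \<Rightarrow> real" where
  "min_colsum a = Min (range (colsum a))"

lemma colsum_nonneg: "colsum a j \<ge> 0"
  unfolding colsum_def by (auto intro: sum_nonneg)

lemma colsum_le_max_colsum: "colsum a j \<le> max_colsum a"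
  unfolding max_colsum_def by (rule Max_ge) auto

lemma min_colsum_le_colsum: "min_colsum a \<le> colsum a j"
  unfolding min_colsum_def by (rule Min_le) auto

lemma max_colsum_attained:
  obtains j where "max_colsum a = colsum a j"
proof -
  have "max_colsum a \<in> range (colsum a)" unfolding max_colsum_def by (rule Max_in) auto
  then show thesis using that by blast
qed

lemma min_colsum_attained:
  obtains j where "min_colsum a = colsum a j"
proof -
  have "min_colsum a \<in> range (colsum a)" unfolding min_colsum_def by (rule Min_in) auto
  then show thesis using that by blast
qed

lemma min_colsum_nonneg: "min_colsum a \<ge> 0"
  by (metis min_colsum_attained colsum_nonneg)

lemma min_colsum_le_max_colsum: "min_colsum a \<le> max_colsum a"
  using min_colsum_le_colsum colsum_le_max_colsum by (rule order_trans)

lemma max_colsum_nonneg: "max_colsum a \<ge> 0"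
  using min_colsum_nonneg min_colsum_le_max_colsum by (rule order_trans)

lemma max_colsum_mat_1 [simp]: "max_colsum (mat 1 :: real^'d^'d) = 1"
  and min_colsum_mat_1 [simp]: "min_colsum (mat 1 :: real^'d^'d) = 1"
proof -
  have "colsum (mat 1 :: real^'d^'d) = (\<lambda>_. 1)"
    unfolding colsum_def mat_def by (auto simp: if_distrib cong: if_cong)
  then show "max_colsum (mat 1 :: real^'d^'d) = 1" "min_colsum (mat 1 :: real^'d^'d) = 1"
    unfolding max_colsum_def min_colsum_def by simp_all
qed

lemma l1norm_axis: "l1norm (axis j (1::real)) = 1"
  unfolding l1norm_def axis_def by (simp add: if_distrib cong: if_cong)

lemma l1norm_mult_axis: "l1norm (a *v axis j (1::real)) = colsum a j"
proof -
  have "a *v axis j 1 = (\<chi> i. a $ i $ j)"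
    unfolding matrix_vector_mult_def axis_def by (simp add: if_distrib cong: if_cong)
  then show ?thesis unfolding l1norm_def colsum_def by simp
qed

lemma l1norm_mult_le: "l1norm (a *v x) \<le> max_colsum a * l1norm x"
proof -
  have "l1norm (a *v x) = (\<Sum>i\<in>UNIV. \<bar>\<Sum>j\<in>UNIV. a $ i $ j * x $ j\<bar>)"
    unfolding l1norm_def matrix_vector_mult_def by simp
  also have "\<dots> \<le> (\<Sum>i\<in>UNIV. \<Sum>j\<in>UNIV. \<bar>a $ i $ j\<bar> * \<bar>x $ j\<bar>)"
    by (intro sum_mono order_trans[OF sum_abs]) (simp add: abs_mult)
  also have "\<dots> = (\<Sum>j\<in>UNIV. colsum a j * \<bar>x $ j\<bar>)"
    unfolding colsum_def by (subst sum.swap) (simp add: sum_distrib_right)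
  also have "\<dots> \<le> (\<Sum>j\<in>UNIV. max_colsum a * \<bar>x $ j\<bar>)"
    by (intro sum_mono mult_right_mono colsum_le_max_colsum) auto
  also have "\<dots> = max_colsum a * l1norm x"
    unfolding l1norm_def by (simp add: sum_distrib_left)
  finally show ?thesis .
qed

lemma l1norm_mult_ge:
  assumes "nonneg_mat a" "\<And>j. x $ j \<ge> 0"
  shows "min_colsum a * l1norm x \<le> l1norm (a *v x)"
proof -
  have "min_colsum a * l1norm x = (\<Sum>j\<in>UNIV. min_colsum a * \<bar>x $ j\<bar>)"
    unfolding l1norm_def by (simp add: sum_distrib_left)
  also have "\<dots> \<le> (\<Sum>j\<in>UNIV. colsum a j * \<bar>x $ j\<bar>)"
    by (intro sum_mono mult_right_mono min_colsum_le_colsum) auto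
  also have "\<dots> = (\<Sum>i\<in>UNIV. \<Sum>j\<in>UNIV. \<bar>a $ i $ j\<bar> * \<bar>x $ j\<bar>)"
    unfolding colsum_def by (subst sum.swap) (simp add: sum_distrib_right)
  also have "\<dots> = (\<Sum>i\<in>UNIV. \<bar>\<Sum>j\<in>UNIV. a $ i $ j * x $ j\<bar>)"
    using assms unfolding nonneg_mat_def
    by (intro sum.cong refl) (simp add: abs_of_nonneg sum_nonneg)
  also have "\<dots> = l1norm (a *v x)"
    unfolding l1norm_def matrix_vector_mult_def by simp
  finally show ?thesis .
qed

lemma opnorm1_eq_max_colsum: "opnorm1 a = max_colsum a"
  unfolding opnorm1_def
proof (rule cSup_eq_maximum)
  obtain j where "max_colsum a = colsum a j" by (rule max_colsum_attained)
  then show "max_colsum a \<in> (\<lambda>x. l1norm (a *v x)) ` {x. l1norm x = 1}"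
    by (intro image_eqI[of _ _ "axis j 1"]) (auto simp: l1norm_axis l1norm_mult_axis)
next
  fix y assume "y \<in> (\<lambda>x. l1norm (a *v x)) ` {x. l1norm x = 1}"
  then obtain x where "l1norm x = 1" "y = l1norm (a *v x)" by blast
  then show "y \<le> max_colsum a" using l1norm_mult_le[of a x] by simp
qed

lemma iota_eq_min_colsum:
  assumes "nonneg_mat a"
  shows "iota a = min_colsum a"
  unfolding iota_def
proof (rule cInf_eq_minimum)
  obtain j where "min_colsum a = colsum a j" by (rule min_colsum_attained)
  then show "min_colsum a \<in> (\<lambda>x. l1norm (a *v x)) ` simplex_plus"
    by (intro image_eqI[of _ _ "axis j 1"])
      (auto simp: simplex_plus_def l1norm_axis l1norm_mult_axis, simp add: axis_def)
qed (use l1norm_mult_ge[OF assms] in \<open>fastforce simp: simplex_plus_def\<close>)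

lemma nonneg_mat_mat_1: "nonneg_mat (mat 1 :: real^'d^'d)"
  unfolding nonneg_mat_def mat_def by auto

lemma nonneg_mat_mult: "nonneg_mat a \<Longrightarrow> nonneg_mat b \<Longrightarrow> nonneg_mat (a ** b)"
  unfolding nonneg_mat_def matrix_matrix_mult_def by (auto intro!: sum_nonneg)

lemma max_colsum_mult_le: "max_colsum (a ** b) \<le> max_colsum a * max_colsum b"
proof -
  obtain j where "max_colsum (a ** b) = colsum (a ** b) j" by (rule max_colsum_attained)
  also have "\<dots> = l1norm (a *v (b *v axis j 1))"
    by (simp add: l1norm_mult_axis[symmetric] matrix_vector_mul_assoc)
  also have "\<dots> \<le> max_colsum a * l1norm (b *v axis j 1)" by (rule l1norm_mult_le)
  also have "\<dots> \<le> max_colsum a * max_colsum b"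
    by (intro mult_left_mono max_colsum_nonneg) (simp add: l1norm_mult_axis colsum_le_max_colsum)
  finally show ?thesis .
qed

lemma min_colsum_mult_ge:
  assumes "nonneg_mat a" "nonneg_mat b"
  shows "min_colsum a * min_colsum b \<le> min_colsum (a ** b)"
proof -
  obtain j where j: "min_colsum (a ** b) = colsum (a ** b) j" by (rule min_colsum_attained)
  have "min_colsum a * min_colsum b \<le> min_colsum a * l1norm (b *v axis j 1)"
    by (intro mult_left_mono min_colsum_nonneg) (simp add: l1norm_mult_axis min_colsum_le_colsum)
  also have "\<dots> \<le> l1norm (a *v (b *v axis j 1))"
    using assms(2) by (intro l1norm_mult_ge[OF assms(1)])
      (simp add: matrix_vector_mult_def axis_def nonneg_mat_def sum_nonneg)
  also have "\<dots> = min_colsum (a ** b)"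
    by (simp add: j l1norm_mult_axis[symmetric] matrix_vector_mul_assoc)
  finally show ?thesis .
qed

lemma pos_mat_sandwich:
  assumes g: "pos_mat g" and x: "nonneg_mat x" "x \<noteq> 0"
  shows "pos_mat (g ** x ** g)"
  unfolding pos_mat_def
proof (intro allI)
  fix i j
  obtain k l where "x $ k $ l \<noteq> 0" using x(2) by (auto simp: vec_eq_iff)
  then have "0 < x $ k $ l" using x(1) by (simp add: nonneg_mat_def order_less_le)
  then have "0 < g $ i $ k * x $ k $ l" using g unfolding pos_mat_def by simp
  also have "\<dots> \<le> (\<Sum>k'\<in>UNIV. g $ i $ k' * x $ k' $ l)"
    using g x unfolding pos_mat_def nonneg_mat_def
    by (intro member_le_sum mult_nonneg_nonneg) (auto simp: less_imp_le)
  finally have gx: "0 < (g ** x) $ i $ l" by (simp add: matrix_matrix_mult_def)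
  have "nonneg_mat (g ** x)"
    using g x by (intro nonneg_mat_mult) (auto simp: pos_mat_def nonneg_mat_def less_imp_le)
  then have "(g ** x) $ i $ l * g $ l $ j \<le> (\<Sum>l'\<in>UNIV. (g ** x) $ i $ l' * g $ l' $ j)"
    using g unfolding pos_mat_def nonneg_mat_def
    by (intro member_le_sum mult_nonneg_nonneg) (auto simp: less_imp_le)
  moreover have "0 < (g ** x) $ i $ l * g $ l $ j" using gx g unfolding pos_mat_def by simp
  ultimately show "(g ** x ** g) $ i $ j > 0" by (simp add: matrix_matrix_mult_def)
qed

definition col_allowable :: "real^'d^'d \<Rightarrow> bool" where
  "col_allowable a \<longleftrightarrow> nonneg_mat a \<and> 0 < min_colsum a"

lemma col_allowable_mat_1: "col_allowable (mat 1)"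
  by (simp add: col_allowable_def nonneg_mat_mat_1)

lemma col_allowable_mult:
  assumes "col_allowable a" "col_allowable b"
  shows "col_allowable (a ** b)"
proof -
  have "0 < min_colsum a * min_colsum b" using assms by (simp add: col_allowable_def)
  also have "\<dots> \<le> min_colsum (a ** b)" using assms by (simp add: col_allowable_def min_colsum_mult_ge)
  finally show ?thesis using assms by (simp add: col_allowable_def nonneg_mat_mult)
qed

lemma max_colsum_pos: "col_allowable a \<Longrightarrow> 0 < max_colsum a"
  unfolding col_allowable_def using min_colsum_le_max_colsum by (rule less_le_trans[rotated]) simp

lemma ln_max_colsum_mult_le:
  assumes "col_allowable a" "col_allowable b"
  shows "ln (max_colsum (a ** b)) \<le> ln (max_colsum a) + ln (max_colsum b)"
proof -
  have "ln (max_colsum (a ** b)) \<le> ln (max_colsum a * max_colsum b)"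
    using assms by (simp add: max_colsum_mult_le max_colsum_pos col_allowable_mult)
  also have "\<dots> = ln (max_colsum a) + ln (max_colsum b)"
    using max_colsum_pos[OF assms(1)] max_colsum_pos[OF assms(2)] by (simp add: ln_mult)
  finally show ?thesis .
qed

lemma ln_min_colsum_mult_ge:
  assumes "col_allowable a" "col_allowable b"
  shows "ln (min_colsum a) + ln (min_colsum b) \<le> ln (min_colsum (a ** b))"
proof -
  have "ln (min_colsum a) + ln (min_colsum b) = ln (min_colsum a * min_colsum b)"
    using assms by (simp add: ln_mult col_allowable_def)
  also have "\<dots> \<le> ln (min_colsum (a ** b))"
    using assms by (intro ln_mono min_colsum_mult_ge mult_pos_pos) (auto simp: col_allowable_def)
  finally show ?thesis .
qed

definition mat_prod_list :: "(real^'d^'d) list \<Rightarrow> real^'d^'d" where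
  "mat_prod_list xs = foldr (**) xs (mat 1)"

lemma mat_prod_list_Nil [simp]: "mat_prod_list [] = mat 1"
  and mat_prod_list_Cons [simp]: "mat_prod_list (x # xs) = x ** mat_prod_list xs"
  by (simp_all add: mat_prod_list_def)

lemma mat_prod_list_append: "mat_prod_list (xs @ ys) = mat_prod_list xs ** mat_prod_list ys"
  by (induction xs) (auto simp: matrix_mul_assoc matrix_mul_lid)

lemma mprod_eq_mat_prod_list: "mprod a m n = mat_prod_list (map a [m..<n])"
  unfolding mprod_def mat_prod_list_def by (simp add: foldr_map o_def)

lemma mprod_empty: "n \<le> m \<Longrightarrow> mprod a m n = mat 1"
  by (simp add: mprod_eq_mat_prod_list)

lemma mprod_Suc: "m \<le> n \<Longrightarrow> mprod a m (Suc n) = mprod a m n ** a n"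
  by (simp add: mprod_eq_mat_prod_list mat_prod_list_append matrix_mul_rid)

lemma mprod_split: "m \<le> k \<Longrightarrow> k \<le> n \<Longrightarrow> mprod a m n = mprod a m k ** mprod a k n"
  unfolding mprod_eq_mat_prod_list
  by (metis map_append upt_add_eq_append le_add_diff_inverse mat_prod_list_append)

lemma mprod_cong: "(\<And>i. m \<le> i \<Longrightarrow> i < n \<Longrightarrow> a i = b i) \<Longrightarrow> mprod a m n = mprod b m n"
  unfolding mprod_eq_mat_prod_list by (intro arg_cong[where f=mat_prod_list] map_cong) auto

lemma mprod_shift: "mprod a (m + k) (n + k) = mprod (\<lambda>i. a (i + k)) m n"
proof -
  have "map a [m + k..<n + k] = map (\<lambda>i. a (i + k)) [m..<n]"
    by (induction n) auto
  then show ?thesis unfolding mprod_eq_mat_prod_list by simp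
qed

lemma mprod_of_list: "mprod (\<lambda>i. xs ! (i - 1)) 1 (length xs + 1) = mat_prod_list xs"
proof -
  have "[1..<length xs + 1] = map Suc [0..<length xs]" by (simp add: map_Suc_upt)
  then have "map (\<lambda>i. xs ! (i - 1)) [1..<length xs + 1] = map ((!) xs) [0..<length xs]" by simp
  then show ?thesis by (simp add: mprod_eq_mat_prod_list map_nth)
qed

lemma col_allowable_mat_prod_list:
  "(\<And>x. x \<in> set xs \<Longrightarrow> col_allowable x) \<Longrightarrow> col_allowable (mat_prod_list xs)"
  by (induction xs) (auto simp: col_allowable_mat_1 col_allowable_mult)

lemma col_allowable_mprod:
  "(\<And>i. m \<le> i \<Longrightarrow> i < n \<Longrightarrow> col_allowable (a i)) \<Longrightarrow> col_allowable (mprod a m n)"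
  unfolding mprod_eq_mat_prod_list by (intro col_allowable_mat_prod_list) auto

lemma ln_max_colsum_mprod_le:
  assumes "\<And>i. m \<le> i \<Longrightarrow> i < n \<Longrightarrow> col_allowable (a i)"
  shows "ln (max_colsum (mprod a m n)) \<le> (\<Sum>i\<in>{m..<n}. ln (max_colsum (a i)))"
  using assms
proof (induction n)
  case (Suc n)
  show ?case
  proof (cases "m \<le> n")
    case True
    then have "ln (max_colsum (mprod a m (Suc n))) \<le> ln (max_colsum (mprod a m n)) + ln (max_colsum (a n))"
      using Suc.prems by (simp add: mprod_Suc ln_max_colsum_mult_le col_allowable_mprod)
    also have "\<dots> \<le> (\<Sum>i\<in>{m..<Suc n}. ln (max_colsum (a i)))"
      using Suc True by simp
    finally show ?thesis .
  qed (simp add: mprod_empty)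
qed (simp add: mprod_empty)

lemma ln_min_colsum_mprod_ge:
  assumes "\<And>i. m \<le> i \<Longrightarrow> i < n \<Longrightarrow> col_allowable (a i)"
  shows "(\<Sum>i\<in>{m..<n}. ln (min_colsum (a i))) \<le> ln (min_colsum (mprod a m n))"
  using assms
proof (induction n)
  case (Suc n)
  show ?case
  proof (cases "m \<le> n")
    case True
    then have "(\<Sum>i\<in>{m..<Suc n}. ln (min_colsum (a i))) \<le> ln (min_colsum (mprod a m n)) + ln (min_colsum (a n))"
      using Suc by simp
    also have "\<dots> \<le> ln (min_colsum (mprod a m (Suc n)))"
      using Suc.prems True by (simp add: mprod_Suc ln_min_colsum_mult_ge col_allowable_mprod)
    finally show ?thesis .
  qed (simp add: mprod_empty)
qed (simp add: mprod_empty)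

lemma ln_max_colsum_mprod_ge:
  assumes "\<And>i. m \<le> i \<Longrightarrow> i < n \<Longrightarrow> col_allowable (a i)"
  shows "(\<Sum>i\<in>{m..<n}. ln (min_colsum (a i))) \<le> ln (max_colsum (mprod a m n))"
proof -
  have "col_allowable (mprod a m n)" using assms by (rule col_allowable_mprod)
  then have "ln (min_colsum (mprod a m n)) \<le> ln (max_colsum (mprod a m n))"
    by (intro ln_mono min_colsum_le_max_colsum) (simp add: col_allowable_def)
  moreover have "(\<Sum>i\<in>{m..<n}. ln (min_colsum (a i))) \<le> ln (min_colsum (mprod a m n))"
    using assms by (rule ln_min_colsum_mprod_ge)
  ultimately show ?thesis by linarith
qed

lemma max_colsum_mat_prod_list_replicate:
  "max_colsum (mat_prod_list (concat (replicate m xs))) \<le> max_colsum (mat_prod_list xs) ^ m"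
proof (induction m)
  case (Suc m)
  have "max_colsum (mat_prod_list (concat (replicate (Suc m) xs)))
      \<le> max_colsum (mat_prod_list xs) * max_colsum (mat_prod_list (concat (replicate m xs)))"
    by (simp add: mat_prod_list_append max_colsum_mult_le)
  also have "\<dots> \<le> max_colsum (mat_prod_list xs) ^ Suc m"
    using Suc by (simp add: mult_left_mono max_colsum_nonneg)
  finally show ?case .
qed simp

lemma gen_semigroup_mult:
  "h \<in> gen_semigroup S \<Longrightarrow> g \<in> gen_semigroup S \<Longrightarrow> g ** h \<in> gen_semigroup S"
  by (induction h rule: gen_semigroup.induct)
    (simp add: matrix_mul_rid, metis gen_semigroup.mult matrix_mul_assoc)

lemma gen_semigroup_iff_mat_prod_list:
  "g \<in> gen_semigroup S \<longleftrightarrow> (\<exists>xs. set xs \<subseteq> S \<and> g = mat_prod_list xs)"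
proof
  assume "g \<in> gen_semigroup S"
  then show "\<exists>xs. set xs \<subseteq> S \<and> g = mat_prod_list xs"
  proof (induction g rule: gen_semigroup.induct)
    case one
    show ?case by (intro exI[of _ "[]"]) simp
  next
    case (mult g a)
    then obtain xs where "set xs \<subseteq> S" "g = mat_prod_list xs" by blast
    with mult show ?case
      by (intro exI[of _ "xs @ [a]"]) (simp add: mat_prod_list_append matrix_mul_rid)
  qed
next
  assume "\<exists>xs. set xs \<subseteq> S \<and> g = mat_prod_list xs"
  then obtain xs where "set xs \<subseteq> S" "g = mat_prod_list xs" by blast
  then show "g \<in> gen_semigroup S"
  proof (induction xs arbitrary: g)
    case (Cons x xs)
    have "x \<in> gen_semigroup S"
      using Cons.prems gen_semigroup.mult[OF gen_semigroup.one, of x S] by (simp add: matrix_mul_lid)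
    with Cons show ?case by (simp add: gen_semigroup_mult)
  qed (simp add: gen_semigroup.one)
qed

section \<open>The spectral radius is bounded by the norm\<close>

lemma det_eq_0_iff_kernel: "det (B :: complex^'d^'d) = 0 \<longleftrightarrow> (\<exists>v. v \<noteq> 0 \<and> B *v v = 0)"
  using invertible_det_nz[of B] invertible_left_inverse[of B] matrix_left_invertible_ker[of B]
  by blast

lemma eigenvalue_iff_det: "(\<exists>v. v \<noteq> 0 \<and> cmat a *v v = l *s v) \<longleftrightarrow> det (cmat a - mat l) = 0"
proof -
  have mat_l: "(mat l :: complex^'d^'d) *v v = l *s v" for v
    by (simp add: vec_eq_iff matrix_vector_mult_def mat_def if_distrib[of "\<lambda>x. x * _"] cong: if_cong)
  show ?thesis by (simp add: det_eq_0_iff_kernel matrix_vector_mult_diff_rdistrib mat_l)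
qed

definition charpoly :: "real^'d^'d \<Rightarrow> complex poly" where
  "charpoly a = (\<Sum>p | p permutes (UNIV::'d set).
      smult (of_int (sign p)) (\<Prod>i\<in>UNIV. [: cmat a $ i $ p i, - (if p i = i then 1 else 0) :]))"

lemma poly_charpoly: "poly (charpoly a) l = det (cmat a - mat l)"
  unfolding charpoly_def det_def poly_sum poly_prod
  by (intro sum.cong refl) (auto simp: poly_prod mat_def intro!: prod.cong)

lemma coeff_charpoly_card: "coeff (charpoly (a :: real^'d^'d)) CARD('d) = (-1) ^ CARD('d)"
proof -
  define f :: "'d \<Rightarrow> ('d \<Rightarrow> 'd) \<Rightarrow> complex poly" where
    "f i p = [: cmat a $ i $ p i, - (if p i = i then 1 else 0) :]" for i p
  have "degree (\<Prod>i\<in>UNIV. f i p) < CARD('d)" if "p permutes UNIV" "p \<noteq> id" for p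
  proof -
    obtain k where "p k \<noteq> k" using \<open>p \<noteq> id\<close> by (auto simp: fun_eq_iff)
    \<comment> \<open>the factor at a point moved by \<open>p\<close> is constant\<close>
    then have "(\<Sum>i\<in>UNIV. degree (f i p)) < (\<Sum>i\<in>(UNIV::'d set). 1)"
      by (intro sum_strict_mono_ex1) (auto simp: f_def)
    then show ?thesis
      using degree_prod_sum_le[of UNIV "\<lambda>i. f i p"] by (simp add: o_def)
  qed
  then have "coeff (smult (of_int (sign p)) (\<Prod>i\<in>UNIV. f i p)) CARD('d) = 0"
    if "p \<in> {p. p permutes UNIV} - {id}" for p
    using that by (simp add: coeff_eq_0)
  then have "coeff (charpoly a) CARD('d) = coeff (\<Prod>i\<in>UNIV. f i id) CARD('d)"
    unfolding charpoly_def f_def[symmetric] coeff_sum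
    by (subst sum.remove[of _ id]) (auto simp: permutes_id finite_permutations sign_id)
  also have "\<dots> = (-1) ^ CARD('d)"
  proof -
    have "degree (\<Prod>i\<in>UNIV. f i id) = CARD('d)"
      by (subst degree_prod_eq_sum_degree) (auto simp: f_def)
    moreover have "lead_coeff (\<Prod>i\<in>UNIV. f i id) = (-1) ^ CARD('d)"
      by (simp add: lead_coeff_prod f_def)
    ultimately show ?thesis by simp
  qed
  finally show ?thesis .
qed

text \<open>\<open>spectral_radius\<close> is a \<open>Max\<close>, which says nothing on infinite or empty sets.\<close>

lemma eigenvalues_finite_nonempty:
  fixes a :: "real^'d^'d"
  defines "E \<equiv> {l. \<exists>v::complex^'d. v \<noteq> 0 \<and> cmat a *v v = l *s v}"
  shows "finite E" "E \<noteq> {}"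
proof -
  have E: "E = {l. poly (charpoly a) l = 0}"
    by (simp add: E_def eigenvalue_iff_det poly_charpoly)
  have "degree (charpoly a) \<ge> CARD('d)" and nonzero: "charpoly a \<noteq> 0"
    using coeff_charpoly_card[of a] by (auto intro: le_degree)
  moreover have "0 < CARD('d)" by simp
  ultimately have "0 < degree (charpoly a)" by linarith
  with nonzero have "finite {l. poly (charpoly a) l = 0}" "\<not> constant (poly (charpoly a))"
    by (auto simp: poly_roots_finite constant_degree)
  then show "finite E" "E \<noteq> {}"
    unfolding E using fundamental_theorem_of_algebra by auto
qed

lemma eigenvalue_norm_le_max_colsum:
  assumes "v \<noteq> 0" "cmat a *v v = l *s v"
  shows "cmod l \<le> max_colsum a"
proof -
  define n where "n = (\<Sum>j\<in>UNIV. cmod (v $ j))"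
  obtain j where "v $ j \<noteq> 0" using assms(1) by (auto simp: vec_eq_iff)
  then have "0 < cmod (v $ j)" by simp
  also have "cmod (v $ j) \<le> n" unfolding n_def by (rule member_le_sum) auto
  finally have "0 < n" .
  have "cmod l * n = (\<Sum>i\<in>UNIV. cmod ((l *s v) $ i))"
    by (simp add: n_def sum_distrib_left norm_mult)
  also have "\<dots> = (\<Sum>i\<in>UNIV. cmod (\<Sum>j\<in>UNIV. cmat a $ i $ j * v $ j))"
    using assms(2)[symmetric] by (simp add: matrix_vector_mult_def)
  also have "\<dots> \<le> (\<Sum>i\<in>UNIV. \<Sum>j\<in>UNIV. \<bar>a $ i $ j\<bar> * cmod (v $ j))"
    by (intro sum_mono order_trans[OF norm_sum]) (simp add: cmat_def norm_mult)
  also have "\<dots> = (\<Sum>j\<in>UNIV. colsum a j * cmod (v $ j))"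
    unfolding colsum_def by (subst sum.swap) (simp add: sum_distrib_right)
  also have "\<dots> \<le> max_colsum a * n"
    unfolding n_def sum_distrib_left by (intro sum_mono mult_right_mono colsum_le_max_colsum) auto
  finally show ?thesis using \<open>0 < n\<close> by simp
qed

lemma spectral_radius_le_max_colsum: "spectral_radius (a :: real^'d^'d) \<le> max_colsum a"
proof -
  let ?E = "{l. \<exists>v::complex^'d. v \<noteq> 0 \<and> cmat a *v v = l *s v}"
  have "{cmod l | l. \<exists>v::complex^'d. v \<noteq> 0 \<and> cmat a *v v = l *s v} = cmod ` ?E" by blast
  then show ?thesis unfolding spectral_radius_def
    using eigenvalues_finite_nonempty[of a] eigenvalue_norm_le_max_colsum
    by (intro Max.boundedI) auto
qed

section \<open>Fekete's subadditive lemma\<close>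

lemma subadditive_mult_add_le:
  fixes s :: "nat \<Rightarrow> real"
  assumes sub: "\<And>m n. s (m + n) \<le> s m + s n"
  shows "s (q * k + r) \<le> real q * s k + s r"
proof (induction q)
  case (Suc q)
  have "s (Suc q * k + r) = s (k + (q * k + r))" by (simp add: algebra_simps)
  also have "\<dots> \<le> s k + s (q * k + r)" by (rule sub)
  also have "\<dots> \<le> s k + (real q * s k + s r)" using Suc by simp
  finally show ?case by (simp add: algebra_simps)
qed simp

lemma subadditive_le_linear:
  fixes s :: "nat \<Rightarrow> real"
  assumes sub: "\<And>m n. s (m + n) \<le> s m + s n" and "0 < k"
  shows "s n \<le> real n * (s k / real k) + (\<bar>s k\<bar> + (\<Sum>j<k. \<bar>s j\<bar>))"
proof -
  define q j where "q = n div k" and "j = n mod k"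
  have "j < k" unfolding j_def using \<open>0 < k\<close> by simp
  have "real n = real q * real k + real j"
    unfolding q_def j_def by (metis div_mult_mod_eq of_nat_add of_nat_mult)
  then have "real n * (s k / real k) = real q * s k + real j / real k * s k"
    using \<open>0 < k\<close> by (simp add: field_simps)
  moreover have "s n \<le> real q * s k + s j"
    unfolding q_def j_def by (subst div_mult_mod_eq[symmetric, of n k]) (rule subadditive_mult_add_le[OF sub])
  moreover have "\<bar>real j / real k * s k\<bar> \<le> \<bar>s k\<bar>"
    using \<open>j < k\<close> mult_right_mono[of "real j / real k" 1 "\<bar>s k\<bar>"] by (simp add: abs_mult)
  moreover have "\<bar>s j\<bar> \<le> (\<Sum>j<k. \<bar>s j\<bar>)"
    using \<open>j < k\<close> by (intro member_le_sum) auto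
  ultimately show ?thesis by linarith
qed

lemma fekete_convergent:
  fixes s :: "nat \<Rightarrow> real"
  assumes sub: "\<And>m n. s (m + n) \<le> s m + s n"
    and lower: "\<And>n. real n * c \<le> s n"
  shows "convergent (\<lambda>n. s n / real n)"
proof -
  define S where "S = (\<lambda>n. s n / real n) ` {1..}"
  have bdd: "bdd_below S"
    unfolding S_def using lower by (intro bdd_belowI[of _ c]) (auto simp: field_simps)
  have "(\<lambda>n. s n / real n) \<longlonglongrightarrow> Inf S"
  proof (rule LIMSEQ_I)
    fix r :: real
    assume "r > 0"
    then obtain k where k: "k \<ge> 1" "s k / real k < Inf S + r / 2"
      using cInf_less_iff[OF _ bdd, of "Inf S + r / 2"] by (auto simp: S_def)
    define C where "C = \<bar>s k\<bar> + (\<Sum>j<k. \<bar>s j\<bar>)"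
    obtain N :: nat where N: "real N > 2 * C / r" using reals_Archimedean2 by blast
    have "\<bar>s n / real n - Inf S\<bar> < r" if "n > N" for n
    proof -
      have "s n / real n \<le> s k / real k + C / real n"
        using subadditive_le_linear[OF sub, of k n] k(1) that by (simp add: C_def field_simps)
      moreover have "C / real n < r / 2"
        using N that \<open>r > 0\<close> by (simp add: field_simps) (smt (verit) of_nat_less_iff mult_strict_left_mono)
      moreover have "Inf S \<le> s n / real n"
        unfolding S_def using bdd that by (intro cInf_lower) (auto simp: S_def)
      ultimately show ?thesis using k by linarith
    qed
    then show "\<exists>no. \<forall>n\<ge>no. norm (s n / real n - Inf S) < r"
      by (intro exI[of _ "Suc N"]) auto
  qed
  then show ?thesis by (rule convergentI)
qed

lemma continuous_on_matrix_entry: "continuous_on UNIV (\<lambda>a::real^'d^'d. a $ i $ j)"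
  by (intro continuous_on_component continuous_on_id)

lemma borel_measurable_matrix_entry [measurable]:
  "(\<lambda>a::real^'d^'d. a $ i $ j) \<in> borel_measurable borel"
  by (rule borel_measurable_continuous_onI[OF continuous_on_matrix_entry])

lemma borel_measurable_colsum [measurable]: "(\<lambda>a::real^'d^'d. colsum a j) \<in> borel_measurable borel"
  unfolding colsum_def by measurable

lemma borel_measurable_max_colsum [measurable]:
  "(max_colsum :: real^'d^'d \<Rightarrow> real) \<in> borel_measurable borel"
  unfolding max_colsum_def[abs_def] by (intro borel_measurable_Max) auto

lemma borel_measurable_min_colsum [measurable]:
  "(min_colsum :: real^'d^'d \<Rightarrow> real) \<in> borel_measurable borel"
  unfolding min_colsum_def[abs_def] by (intro borel_measurable_Min) auto

lemma borel_measurable_matrix_mult [measurable (raw)]: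
  fixes f g :: "'x \<Rightarrow> real^'d^'d"
  assumes "f \<in> borel_measurable M" "g \<in> borel_measurable M"
  shows "(\<lambda>x. f x ** g x) \<in> borel_measurable M"
proof -
  have "continuous_on UNIV (\<lambda>p::(real^'d^'d) \<times> (real^'d^'d). fst p ** snd p)"
    unfolding matrix_matrix_mult_def
    by (intro continuous_on_vec_lambda continuous_intros continuous_on_component
        continuous_on_fst continuous_on_snd continuous_on_id)
  from borel_measurable_continuous_Pair[OF assms this] show ?thesis by simp
qed

lemma pred_nonneg_mat [measurable]: "Measurable.pred borel (nonneg_mat :: real^'d^'d \<Rightarrow> bool)"
proof -
  have "{a :: real^'d^'d. nonneg_mat a} = (\<Inter>i. \<Inter>j. {a. a $ i $ j \<ge> 0})"
    unfolding nonneg_mat_def by auto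
  moreover have "closed {a :: real^'d^'d. a $ i $ j \<ge> 0}" for i j
    by (intro closed_Collect_le continuous_on_const continuous_on_matrix_entry)
  ultimately show ?thesis by (simp add: pred_def closed_INT borel_closed)
qed

lemma borel_measurable_mprod:
  assumes "sets mu = sets borel" "{m..<n} \<subseteq> I"
  shows "(\<lambda>x. mprod x m n) \<in> borel_measurable (PiM I (\<lambda>_. mu))"
  using assms(2)
proof (induction n)
  case (Suc n)
  show ?case
  proof (cases "m \<le> n")
    case True
    then have "n \<in> I" using Suc.prems by auto
    then have [measurable]: "(\<lambda>x. x n) \<in> borel_measurable (PiM I (\<lambda>_. mu))"
      using measurable_component_singleton[of n I "\<lambda>_. mu"]
      by (simp add: measurable_cong_sets[OF refl assms(1)])
    have [measurable]: "(\<lambda>x. mprod x m n) \<in> borel_measurable (PiM I (\<lambda>_. mu))"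
      by (rule Suc.IH) (use Suc.prems in auto)
    have "(\<lambda>x. mprod x m n ** x n) \<in> borel_measurable (PiM I (\<lambda>_. mu))"
      by measurable
    with True show ?thesis by (simp add: mprod_Suc)
  qed (simp add: mprod_empty)
qed (simp add: mprod_empty)

lemma AE_in_msupp:
  assumes "sets mu = sets borel"
  shows "AE a in mu. a \<in> msupp mu"
proof -
  define B where "B = {ball a e | a e. e > 0 \<and> emeasure mu (ball a e) = 0}"
  obtain B' where B': "B' \<subseteq> B" "countable B'" "\<Union>B' = \<Union>B"
    using Lindelof[of B] unfolding B_def by blast
  have "(\<Union>S\<in>B'. S) \<in> null_sets mu"
  proof (rule null_sets_UN'[OF B'(2)])
    fix S
    assume "S \<in> B'"
    then obtain a e where "S = ball a e" "emeasure mu (ball a e) = 0"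
      using B'(1) unfolding B_def by auto
    then show "S \<in> null_sets mu" using assms by (simp add: null_sets_def)
  qed
  moreover have "- msupp mu \<subseteq> \<Union>B"
  proof
    fix a
    assume "a \<in> - msupp mu"
    then obtain e where "e > 0" "emeasure mu (ball a e) = 0"
      unfolding msupp_def by (auto simp: not_gr_zero)
    then show "a \<in> \<Union>B" unfolding B_def by (intro UnionI[of "ball a e"]) auto
  qed
  ultimately show ?thesis using B'(3) by (intro AE_I'[of "\<Union>B'"]) auto
qed

section \<open>Products of i.i.d. random matrices\<close>

locale iid_matrix_products =
  fixes mu :: "(real^'d^'d) measure"
  assumes prob_space_mu: "prob_space mu"
    and sets_mu: "sets mu = sets borel"
    and AE_col_allowable: "AE a in mu. col_allowable a"
    and integrable_ln_max_colsum: "integrable mu (\<lambda>a. ln (max_colsum a))"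
    and integrable_ln_min_colsum: "integrable mu (\<lambda>a. ln (min_colsum a))"
begin

abbreviation P :: "nat \<Rightarrow> (nat \<Rightarrow> real^'d^'d) measure" where
  "P n \<equiv> PiM {..<n} (\<lambda>_. mu)"

definition log_norm :: "nat \<Rightarrow> nat \<Rightarrow> (nat \<Rightarrow> real^'d^'d) \<Rightarrow> real" where
  "log_norm m n x = ln (max_colsum (mprod x m n))"

definition expected_log_norm :: "nat \<Rightarrow> real" where
  "expected_log_norm n = (\<integral>x. log_norm 0 n x \<partial>P n)"

lemma product_prob_space_mu: "product_prob_space (\<lambda>_::nat. mu)"
  by (simp add: product_prob_space_def product_prob_space_axioms_def product_sigma_finite_def
      prob_space_mu prob_space_imp_sigma_finite)

lemma measurable_component: "i < N \<Longrightarrow> (\<lambda>x. x i) \<in> measurable (P N) mu"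
  by simp

lemma distr_component: "i < N \<Longrightarrow> distr (P N) mu (\<lambda>x. x i) = mu"
  using distr_PiM_component[of "{..<N}" "\<lambda>_. mu" i] prob_space_mu by simp

lemma integrable_component:
  fixes g :: "real^'d^'d \<Rightarrow> real"
  assumes "i < N" "integrable mu g"
  shows "integrable (P N) (\<lambda>x. g (x i))"
  using assms integrable_distr_eq[OF measurable_component borel_measurable_integrable, of i N g]
  by (simp add: distr_component)

lemma integral_component:
  fixes g :: "real^'d^'d \<Rightarrow> real"
  assumes "i < N" "g \<in> borel_measurable mu"
  shows "(\<integral>x. g (x i) \<partial>P N) = (\<integral>a. g a \<partial>mu)"
  using integral_distr[OF measurable_component assms(2), of i N] assms(1)
  by (simp add: distr_component)

lemma AE_P_col_allowable: "AE x in P N. \<forall>i<N. col_allowable (x i) \<and> x i \<in> msupp mu"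
proof -
  have "AE a in mu. col_allowable a \<and> a \<in> msupp mu"
    using AE_col_allowable AE_in_msupp[OF sets_mu] by eventually_elim simp
  then have "\<forall>i\<in>{..<N}. AE x in P N. col_allowable (x i) \<and> x i \<in> msupp mu"
    using AE_PiM_component[of "{..<N}" "\<lambda>_. mu"] prob_space_mu by auto
  then have "AE x in P N. \<forall>i\<in>{..<N}. col_allowable (x i) \<and> x i \<in> msupp mu"
    by (simp add: eventually_ball_finite_distrib)
  then show ?thesis by (rule eventually_mono) auto
qed

lemma borel_measurable_log_norm: "n \<le> N \<Longrightarrow> log_norm m n \<in> borel_measurable (P N)"
  unfolding log_norm_def[abs_def]
  using borel_measurable_mprod[OF sets_mu, of m n "{..<N}"] by measurable auto

lemma abs_log_norm_le:
  assumes "\<And>i. m \<le> i \<Longrightarrow> i < n \<Longrightarrow> col_allowable (x i)"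
  shows "\<bar>log_norm m n x\<bar> \<le> (\<Sum>i\<in>{m..<n}. \<bar>ln (max_colsum (x i))\<bar> + \<bar>ln (min_colsum (x i))\<bar>)"
    (is "_ \<le> ?B")
proof -
  have "log_norm m n x \<le> (\<Sum>i\<in>{m..<n}. ln (max_colsum (x i)))"
    "(\<Sum>i\<in>{m..<n}. ln (min_colsum (x i))) \<le> log_norm m n x"
    unfolding log_norm_def using assms by (auto intro: ln_max_colsum_mprod_le ln_max_colsum_mprod_ge)
  moreover have "(\<Sum>i\<in>{m..<n}. ln (max_colsum (x i))) \<le> ?B" "- (\<Sum>i\<in>{m..<n}. ln (min_colsum (x i))) \<le> ?B"
    by (auto simp flip: sum_negf intro!: sum_mono)
  ultimately show ?thesis by linarith
qed

lemma integrable_log_norm: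
  assumes "m \<le> n" "n \<le> N"
  shows "integrable (P N) (log_norm m n)"
proof (rule Bochner_Integration.integrable_bound)
  show "integrable (P N) (\<lambda>x. \<Sum>i\<in>{m..<n}. \<bar>ln (max_colsum (x i))\<bar> + \<bar>ln (min_colsum (x i))\<bar>)"
    using assms integrable_ln_max_colsum integrable_ln_min_colsum
    by (intro Bochner_Integration.integrable_sum Bochner_Integration.integrable_add
        integrable_abs integrable_component) auto
  show "log_norm m n \<in> borel_measurable (P N)" using assms(2) by (rule borel_measurable_log_norm)
  show "AE x in P N. norm (log_norm m n x)
      \<le> norm (\<Sum>i\<in>{m..<n}. \<bar>ln (max_colsum (x i))\<bar> + \<bar>ln (min_colsum (x i))\<bar>)"
    using AE_P_col_allowable[of N]
  proof eventually_elim
    case (elim x)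
    then have "\<bar>log_norm m n x\<bar> \<le> (\<Sum>i\<in>{m..<n}. \<bar>ln (max_colsum (x i))\<bar> + \<bar>ln (min_colsum (x i))\<bar>)"
      using assms by (intro abs_log_norm_le) auto
    then show ?case by (simp add: sum_nonneg)
  qed
qed

lemma expected_log_norm_eq_prefix: "expected_log_norm m = (\<integral>x. log_norm 0 m x \<partial>P (m + n))"
proof -
  interpret product_prob_space "\<lambda>_::nat. mu" UNIV by (rule product_prob_space_mu)
  have "distr (P (m + n)) (P m) (\<lambda>x. restrict x {..<m}) = P m"
    using distr_restrict[of "{..<m}" "{..<m + n}"] by simp
  then have "expected_log_norm m = (\<integral>x. log_norm 0 m x \<partial>distr (P (m + n)) (P m) (\<lambda>x. restrict x {..<m}))"
    by (simp add: expected_log_norm_def)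
  also have "\<dots> = (\<integral>x. log_norm 0 m (restrict x {..<m}) \<partial>P (m + n))"
    by (rule integral_distr[OF measurable_restrict_subset borel_measurable_log_norm]) auto
  also have "\<dots> = (\<integral>x. log_norm 0 m x \<partial>P (m + n))"
    unfolding log_norm_def by (intro Bochner_Integration.integral_cong refl arg_cong[where f=ln]
        arg_cong[where f=max_colsum] mprod_cong) auto
  finally show ?thesis .
qed

lemma expected_log_norm_eq_suffix: "expected_log_norm n = (\<integral>x. log_norm m (m + n) x \<partial>P (m + n))"
proof -
  interpret product_prob_space "\<lambda>_::nat. mu" UNIV by (rule product_prob_space_mu)
  define shift :: "(nat \<Rightarrow> real^'d^'d) \<Rightarrow> nat \<Rightarrow> real^'d^'d"
    where "shift = (\<lambda>x. \<lambda>j\<in>{..<n}. x (j + m))"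
  have shift: "shift \<in> measurable (P (m + n)) (P n)"
    unfolding shift_def by (intro measurable_restrict measurable_component_singleton) auto
  have "distr (P (m + n)) (P n) shift = P n"
    using distr_reorder[of "\<lambda>j. j + m" "{..<n}" "{..<m + n}"] by (simp add: inj_on_def shift_def)
  then have "expected_log_norm n = (\<integral>x. log_norm 0 n x \<partial>distr (P (m + n)) (P n) shift)"
    by (simp add: expected_log_norm_def)
  also have "\<dots> = (\<integral>x. log_norm 0 n (shift x) \<partial>P (m + n))"
    by (rule integral_distr[OF shift borel_measurable_log_norm]) simp
  also have "\<dots> = (\<integral>x. log_norm m (m + n) x \<partial>P (m + n))"
  proof (intro Bochner_Integration.integral_cong refl)
    fix x :: "nat \<Rightarrow> real^'d^'d"
    have "mprod (shift x) 0 n = mprod (\<lambda>j. x (j + m)) 0 n"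
      unfolding shift_def by (intro mprod_cong) auto
    also have "\<dots> = mprod x m (m + n)" using mprod_shift[of x 0 m n] by (simp add: add.commute)
    finally show "log_norm 0 n (shift x) = log_norm m (m + n) x" by (simp add: log_norm_def)
  qed
  finally show ?thesis .
qed

lemma expected_log_norm_subadditive:
  "expected_log_norm (m + n) \<le> expected_log_norm m + expected_log_norm n"
proof -
  have "expected_log_norm (m + n) \<le> (\<integral>x. log_norm 0 m x + log_norm m (m + n) x \<partial>P (m + n))"
    unfolding expected_log_norm_def
  proof (intro integral_mono_AE integrable_log_norm Bochner_Integration.integrable_add)
    show "AE x in P (m + n). log_norm 0 (m + n) x \<le> log_norm 0 m x + log_norm m (m + n) x"
      using AE_P_col_allowable[of "m + n"]
    proof eventually_elim
      case (elim x)
      then have "col_allowable (mprod x 0 m)" "col_allowable (mprod x m (m + n))"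
        by (auto intro: col_allowable_mprod)
      then show ?case
        unfolding log_norm_def using mprod_split[of 0 m "m + n" x] by (simp add: ln_max_colsum_mult_le)
    qed
  qed auto
  also have "\<dots> = expected_log_norm m + expected_log_norm n"
    by (simp add: integrable_log_norm expected_log_norm_eq_prefix[of m n] expected_log_norm_eq_suffix[of n m])
  finally show ?thesis .
qed

lemma expected_log_norm_ge: "real n * (\<integral>a. ln (min_colsum a) \<partial>mu) \<le> expected_log_norm n"
proof -
  have "(\<Sum>i<n. \<integral>x. ln (min_colsum (x i)) \<partial>P n) = (\<Sum>i<n. \<integral>a. ln (min_colsum a) \<partial>mu)"
    using borel_measurable_integrable[OF integrable_ln_min_colsum]
    by (intro sum.cong refl integral_component) auto
  then have "real n * (\<integral>a. ln (min_colsum a) \<partial>mu) = (\<Sum>i<n. \<integral>x. ln (min_colsum (x i)) \<partial>P n)"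
    by simp
  also have "\<dots> = (\<integral>x. (\<Sum>i<n. ln (min_colsum (x i))) \<partial>P n)"
    by (intro Bochner_Integration.integral_sum[symmetric] integrable_component integrable_ln_min_colsum) auto
  also have "\<dots> \<le> expected_log_norm n"
    unfolding expected_log_norm_def
  proof (intro integral_mono_AE integrable_log_norm Bochner_Integration.integrable_sum
      integrable_component integrable_ln_min_colsum)
    show "AE x in P n. (\<Sum>i<n. ln (min_colsum (x i))) \<le> log_norm 0 n x"
      using AE_P_col_allowable[of n]
      by eventually_elim (simp add: log_norm_def ln_max_colsum_mprod_ge atLeast0LessThan[symmetric])
  qed auto
  finally show ?thesis .
qed

lemma expected_log_norm_tendsto_lyap: "(\<lambda>n. expected_log_norm n / real n) \<longlonglongrightarrow> lyap mu"
proof -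
  have "convergent (\<lambda>n. expected_log_norm n / real n)"
    using expected_log_norm_subadditive expected_log_norm_ge by (rule fekete_convergent)
  moreover have "lyap mu = lim (\<lambda>n. expected_log_norm n / real n)"
    unfolding lyap_def expected_log_norm_def log_norm_def opnorm1_eq_max_colsum ..
  ultimately show ?thesis by (simp add: convergent_LIMSEQ_iff)
qed

text \<open>An averaging argument: once the mean of \<open>log_norm 0 n\<close> is below \<open>n ln \<theta>\<close>, so is
  its value on some sample path of column-allowable matrices from the support.\<close>

lemma exists_product_le_exp_lyap:
  assumes "exp (lyap mu) < \<theta>"
  shows "\<exists>H. H \<noteq> [] \<and> set H \<subseteq> {a \<in> msupp mu. col_allowable a} \<and>
      max_colsum (mat_prod_list H) \<le> \<theta> ^ length H"
proof -
  have "0 < \<theta>" using assms exp_gt_zero less_trans by blast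
  then have "lyap mu < ln \<theta>" using assms by (metis exp_less_cancel_iff exp_ln)
  with expected_log_norm_tendsto_lyap have "eventually (\<lambda>n. expected_log_norm n / real n < ln \<theta>) sequentially"
    by (rule order_tendstoD(2))
  then obtain N where N: "\<And>n. n \<ge> N \<Longrightarrow> expected_log_norm n / real n < ln \<theta>"
    unfolding eventually_sequentially by blast
  define n where "n = Suc N"
  have "n \<ge> 1" by (simp add: n_def)
  have less: "expected_log_norm n < real n * ln \<theta>"
    using N[of n] by (simp add: n_def field_simps)
  interpret P: prob_space "P n" using prob_space_mu by (intro prob_space_PiM)
  obtain x where x: "\<forall>i<n. col_allowable (x i) \<and> x i \<in> msupp mu" "log_norm 0 n x \<le> real n * ln \<theta>"
  proof (rule ccontr)
    assume "\<not> thesis"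
    with that have "AE x in P n. real n * ln \<theta> \<le> log_norm 0 n x"
      using AE_P_col_allowable[of n] by (rule_tac eventually_mono) force+
    then have "(\<integral>x. real n * ln \<theta> \<partial>P n) \<le> expected_log_norm n"
      unfolding expected_log_norm_def by (intro integral_mono_AE integrable_log_norm) auto
    with less show False by (simp add: P.prob_space)
  qed
  have "0 < max_colsum (mprod x 0 n)" using x(1) by (intro max_colsum_pos col_allowable_mprod) auto
  then have "max_colsum (mprod x 0 n) = exp (log_norm 0 n x)" by (simp add: log_norm_def)
  also have "\<dots> \<le> exp (real n * ln \<theta>)" using x(2) by simp
  also have "\<dots> = \<theta> ^ n" using \<open>0 < \<theta>\<close> by (simp add: exp_of_nat_mult)
  finally show ?thesis
    using x(1) \<open>n \<ge> 1\<close> by (intro exI[of _ "map x [0..<n]"]) (auto simp: mprod_eq_mat_prod_list)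
qed

end

section \<open>A positive product of small norm\<close>

lemma eventually_mult_power_le:
  fixes c \<theta> \<eta> \<epsilon> :: real
  assumes "0 \<le> \<theta>" "\<theta> < \<eta>" "0 < \<epsilon>"
  shows "eventually (\<lambda>k. c * \<theta> ^ k \<le> \<epsilon> * \<eta> ^ k) sequentially"
proof -
  have "0 < \<eta>" using assms by linarith
  then have "(\<lambda>k. c * (\<theta> / \<eta>) ^ k) \<longlonglongrightarrow> 0"
    using assms by (intro tendsto_mult_right_zero LIMSEQ_power_zero) simp
  then have "eventually (\<lambda>k. c * (\<theta> / \<eta>) ^ k < \<epsilon>) sequentially"
    using assms(3) by (rule order_tendstoD(2))
  then show ?thesis
  proof (rule eventually_mono)
    fix k
    assume "c * (\<theta> / \<eta>) ^ k < \<epsilon>"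
    then have "c * (\<theta> / \<eta>) ^ k * \<eta> ^ k \<le> \<epsilon> * \<eta> ^ k"
      using \<open>0 < \<eta>\<close> by (intro mult_right_mono) auto
    then show "c * \<theta> ^ k \<le> \<epsilon> * \<eta> ^ k" using \<open>0 < \<eta>\<close> by (simp add: power_divide)
  qed
qed

lemma max_colsum_sandwich_le: "max_colsum (g ** x ** g) \<le> max_colsum g ^ 2 * max_colsum x"
proof -
  have "max_colsum (g ** x ** g) \<le> max_colsum g * max_colsum x * max_colsum g"
    by (meson max_colsum_mult_le max_colsum_nonneg mult_right_mono order_trans)
  then show ?thesis by (simp add: power2_eq_square ac_simps)
qed

lemma col_allowable_nonzero: "col_allowable a \<Longrightarrow> a \<noteq> 0"
  by (auto simp: col_allowable_def min_colsum_def colsum_def)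

text \<open>The product \<open>g H\<^sup>m g\<close>: the positive matrix \<open>g\<close> on both sides makes it positive, and
  its norm is at most \<open>\<parallel>g\<parallel>\<^sup>2 \<theta>\<^sup>n\<^sup>m\<close>, which the exponential gap between \<open>\<theta>\<close> and \<open>\<eta>\<close>
  pushes below \<open>\<epsilon> \<eta>\<^sup>K\<close> for large \<open>m\<close>.\<close>

lemma exists_pos_product_le:
  assumes g: "g \<in> gen_semigroup S" "pos_mat g"
    and H: "H \<noteq> []" "set H \<subseteq> {a \<in> S. col_allowable a}"
    and norm_H: "max_colsum (mat_prod_list H) \<le> \<theta> ^ length H"
    and "0 \<le> \<theta>" "\<theta> < \<eta>" "0 < \<epsilon>"
  shows "\<exists>K\<ge>1. \<exists>a. (\<forall>i\<in>{1..K}. a i \<in> S) \<and> pos_mat (mprod a 1 (K + 1)) \<and>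
      max_colsum (mprod a 1 (K + 1)) \<le> \<epsilon> * \<eta> ^ K"
proof -
  obtain G where G: "set G \<subseteq> S" "g = mat_prod_list G"
    using g(1) gen_semigroup_iff_mat_prod_list by blast
  define n where "n = length H"
  have "0 < \<epsilon> * \<eta> ^ (2 * length G)" using assms by simp
  with assms have "eventually (\<lambda>k. max_colsum g ^ 2 * \<theta> ^ k \<le> \<epsilon> * \<eta> ^ (2 * length G) * \<eta> ^ k) sequentially"
    by (intro eventually_mult_power_le) auto
  then obtain M where M: "\<And>k. k \<ge> M \<Longrightarrow> max_colsum g ^ 2 * \<theta> ^ k \<le> \<epsilon> * \<eta> ^ (2 * length G) * \<eta> ^ k"
    unfolding eventually_sequentially by blast
  define m where "m = Suc M"
  have "n \<ge> 1" using H(1) by (simp add: n_def Suc_le_eq)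
  then have "m \<le> n * m" by (metis mult_le_mono1 mult_1)
  then have "n * m \<ge> M" "n * m \<ge> 1" by (simp_all add: m_def)
  define C where "C = concat (replicate m H)"
  define X where "X = mat_prod_list C"
  define L where "L = G @ C @ G"
  have "set C \<subseteq> set H" unfolding C_def by (induction m) auto
  then have "set L \<subseteq> S" "col_allowable X"
    using G(1) H(2) unfolding L_def X_def by (auto intro: col_allowable_mat_prod_list)
  have len: "length L = 2 * length G + n * m"
    by (simp add: L_def C_def length_concat sum_list_replicate n_def)
  have L: "mat_prod_list L = g ** X ** g"
    by (simp add: L_def X_def G(2) mat_prod_list_append matrix_mul_assoc)
  have X: "max_colsum X \<le> \<theta> ^ (n * m)"
    unfolding X_def C_def power_mult using norm_H max_colsum_mat_prod_list_replicate[of m H]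
    by (metis n_def max_colsum_nonneg power_mono order_trans)
  have "max_colsum (mat_prod_list L) \<le> max_colsum g ^ 2 * max_colsum X"
    unfolding L by (rule max_colsum_sandwich_le)
  also have "\<dots> \<le> max_colsum g ^ 2 * \<theta> ^ (n * m)" using X by (intro mult_left_mono) simp_all
  also have "\<dots> \<le> \<epsilon> * \<eta> ^ length L"
    using M[OF \<open>n * m \<ge> M\<close>] by (simp add: len power_add mult.assoc)
  finally have "max_colsum (mat_prod_list L) \<le> \<epsilon> * \<eta> ^ length L" .
  moreover have "pos_mat (mat_prod_list L)"
    unfolding L using g(2) \<open>col_allowable X\<close>
    by (intro pos_mat_sandwich) (auto simp: col_allowable_def col_allowable_nonzero)
  moreover have "length L \<ge> 1" unfolding len using \<open>n * m \<ge> 1\<close> by linarith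
  moreover have "\<forall>i\<in>{1..length L}. L ! (i - 1) \<in> S"
    using \<open>set L \<subseteq> S\<close> by (auto intro!: subsetD[OF _ nth_mem])
  ultimately show ?thesis
    by (intro exI[of _ "length L"] conjI exI[of _ "\<lambda>i. L ! (i - 1)"]) (simp_all only: mprod_of_list)
qed

section \<open>The mean measure of the branching matrices\<close>

lemma prob_space_mean_measure:
  assumes "sets mu = sets borel"
    and "\<And>S. S \<in> sets borel \<Longrightarrow> emeasure mu S =
        (\<integral>\<^sup>+ w. of_nat (card {i\<in>{1..N w}. A w i \<in> S}) \<partial>M) / (\<integral>\<^sup>+ w. of_nat (N w) \<partial>M)"
    and "(\<integral>\<^sup>+ w. of_nat (N w) \<partial>M) \<noteq> 0" "(\<integral>\<^sup>+ w. of_nat (N w) \<partial>M) < \<infinity>"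
  shows "prob_space mu"
proof
  have "{i\<in>{1..N w}. A w i \<in> UNIV} = {1..N w}" for w by auto
  then have "emeasure mu UNIV = (\<integral>\<^sup>+ w. of_nat (N w) \<partial>M) / (\<integral>\<^sup>+ w. of_nat (N w) \<partial>M)"
    using assms(2)[of UNIV] by simp
  moreover have "space mu = UNIV" using sets_eq_imp_space_eq[OF assms(1)] by simp
  ultimately show "emeasure mu (space mu) = 1" using assms(3,4) by simp
qed

lemma AE_mean_measure:
  assumes "sets mu = sets borel"
    and "\<And>S. S \<in> sets borel \<Longrightarrow> emeasure mu S =
        (\<integral>\<^sup>+ w. of_nat (card {i\<in>{1..N w}. A w i \<in> S}) \<partial>M) / (\<integral>\<^sup>+ w. of_nat (N w) \<partial>M)"
    and "Measurable.pred borel P" "\<And>w i. w \<in> space M \<Longrightarrow> P (A w i)"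
  shows "AE a in mu. P a"
proof -
  have "- {a. P a} \<in> sets borel" using assms(3) by (intro borel_comp) (simp add: pred_def)
  then have C: "{a. \<not> P a} \<in> sets borel" by (simp add: Collect_neg_eq)
  have "(\<integral>\<^sup>+ w. of_nat (card {i\<in>{1..N w}. A w i \<in> {a. \<not> P a}}) \<partial>M) = (\<integral>\<^sup>+ w. 0 \<partial>M)"
    using assms(4) by (intro nn_integral_cong) simp
  then have "emeasure mu {a. \<not> P a} = 0" using assms(2)[OF C] by simp
  then have "AE a in mu. a \<notin> {a. \<not> P a}" using C assms(1) by (intro AE_not_in) (simp add: null_sets_def)
  then show ?thesis by simp
qed

lemma logpN_col_allowable:
  "col_allowable a \<Longrightarrow> logpN a = ennreal (max 0 (ln (max (max_colsum a) (inverse (min_colsum a)))))"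
  by (simp add: col_allowable_def logpN_def iota_eq_min_colsum opnorm1_eq_max_colsum)

lemma abs_ln_colsum_le_logpN:
  assumes "col_allowable a"
  shows "ennreal \<bar>ln (max_colsum a)\<bar> \<le> logpN a" "ennreal \<bar>ln (min_colsum a)\<bar> \<le> logpN a"
proof -
  define t where "t = max (max_colsum a) (inverse (min_colsum a))"
  have pos: "0 < min_colsum a" "0 < max_colsum a" using assms by (simp_all add: col_allowable_def max_colsum_pos)
  have "ln (min_colsum a) \<le> ln (max_colsum a)" using pos by (simp add: min_colsum_le_max_colsum)
  moreover have "ln (max_colsum a) \<le> ln t" "- ln (min_colsum a) \<le> ln t"
    using pos by (simp_all add: t_def ln_inverse[symmetric])
  ultimately have "\<bar>ln (max_colsum a)\<bar> \<le> max 0 (ln t)" "\<bar>ln (min_colsum a)\<bar> \<le> max 0 (ln t)"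
    by linarith+
  then show "ennreal \<bar>ln (max_colsum a)\<bar> \<le> logpN a" "ennreal \<bar>ln (min_colsum a)\<bar> \<le> logpN a"
    unfolding logpN_col_allowable[OF assms] t_def[symmetric] by (simp_all only: ennreal_leI)
qed

text \<open>\<open>logpN\<close> is infinite on nonnegative matrices with a zero column.\<close>

lemma AE_col_allowable_of_logpN:
  fixes mu :: "(real^'d^'d) measure"
  assumes sets: "sets mu = sets borel" and nonneg: "AE a in mu. nonneg_mat a"
    and moment: "(\<integral>\<^sup>+ a. logpN a \<partial>mu) < \<infinity>"
  shows "AE a in mu. col_allowable a"
proof -
  define Z where "Z = {a :: real^'d^'d. nonneg_mat a \<and> min_colsum a = 0}"
  have "{a \<in> space borel. nonneg_mat a \<and> min_colsum a = 0} \<in> sets borel" by measurable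
  then have "Z \<in> sets mu" by (simp add: Z_def sets)
  have "\<infinity> * emeasure mu Z = (\<integral>\<^sup>+ a. \<infinity> * indicator Z a \<partial>mu)"
    using \<open>Z \<in> sets mu\<close> by (rule nn_integral_cmult_indicator[symmetric])
  also have "\<dots> \<le> (\<integral>\<^sup>+ a. logpN a \<partial>mu)"
    by (intro nn_integral_mono) (auto simp: Z_def indicator_def logpN_def iota_eq_min_colsum)
  finally have "emeasure mu Z = 0"
    using moment by (auto simp: ennreal_top_mult split: if_splits)
  with \<open>Z \<in> sets mu\<close> have "AE a in mu. a \<notin> Z" by (intro AE_not_in) (simp add: null_sets_def)
  with nonneg show ?thesis
    by eventually_elim (auto simp: Z_def col_allowable_def order_less_le min_colsum_nonneg)
qed

lemma integrable_ln_colsum_of_logpN: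
  fixes mu :: "(real^'d^'d) measure"
  assumes sets: "sets mu = sets borel" and allowable: "AE a in mu. col_allowable a"
    and moment: "(\<integral>\<^sup>+ a. logpN a \<partial>mu) < \<infinity>"
  shows "integrable mu (\<lambda>a. ln (max_colsum a))" "integrable mu (\<lambda>a. ln (min_colsum a))"
proof -
  have *: "integrable mu f"
    if "f \<in> borel_measurable mu" "AE a in mu. ennreal \<bar>f a\<bar> \<le> logpN a" for f :: "real^'d^'d \<Rightarrow> real"
  proof (rule integrableI_bounded)
    have "(\<integral>\<^sup>+ a. ennreal (norm (f a)) \<partial>mu) \<le> (\<integral>\<^sup>+ a. logpN a \<partial>mu)"
      using that(2) by (intro nn_integral_mono_AE) simp
    then show "(\<integral>\<^sup>+ a. ennreal (norm (f a)) \<partial>mu) < \<infinity>" using moment by (rule le_less_trans)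
  qed (fact that(1))
  show "integrable mu (\<lambda>a. ln (max_colsum a))" "integrable mu (\<lambda>a. ln (min_colsum a))"
    using allowable by (intro *; simp add: measurable_cong_sets[OF sets refl] abs_ln_colsum_le_logpN
        eventually_mono[OF allowable])+
qed

lemma iid_matrix_products_mean_measure:
  fixes mu :: "(real^'d^'d) measure"
  assumes sets: "sets mu = sets borel"
    and mu_def: "\<And>S. S \<in> sets borel \<Longrightarrow> emeasure mu S =
        (\<integral>\<^sup>+ w. of_nat (card {i\<in>{1..N w}. A w i \<in> S}) \<partial>M) / (\<integral>\<^sup>+ w. of_nat (N w) \<partial>M)"
    and "(\<integral>\<^sup>+ w. of_nat (N w) \<partial>M) \<noteq> 0" "(\<integral>\<^sup>+ w. of_nat (N w) \<partial>M) < \<infinity>"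
    and "\<And>w i. w \<in> space M \<Longrightarrow> nonneg_mat (A w i)"
    and moment: "(\<integral>\<^sup>+ a. logpN a \<partial>mu) < \<infinity>"
  shows "iid_matrix_products mu"
proof -
  have "AE a in mu. nonneg_mat a"
    by (rule AE_mean_measure[OF sets mu_def pred_nonneg_mat assms(5)])
  then have allowable: "AE a in mu. col_allowable a"
    using sets moment by (intro AE_col_allowable_of_logpN)
  show ?thesis
    using prob_space_mean_measure[OF sets mu_def assms(3,4)] sets allowable
      integrable_ln_colsum_of_logpN[OF sets allowable moment]
    by (simp add: iid_matrix_products_def)
qed

theorem lemma2p5:
  fixes M :: "'w measure"
    and N :: "'w \<Rightarrow> nat"
    and A :: "'w \<Rightarrow> nat \<Rightarrow> real^'d^'d"
    and mu :: "(real^'d^'d) measure"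
  assumes P: "prob_space M"
    and N_meas: "N \<in> measurable M (count_space UNIV)"
    and A_meas: "\<And>i. (\<lambda>w. A w i) \<in> borel_measurable M"
    \<comment> \<open>(C1)\<close>
    and N_ge1: "AE w in M. N w \<ge> 1"
    and EN_gt1: "(\<integral>\<^sup>+ w. of_nat (N w) \<partial>M) > 1"
    and EN_fin: "(\<integral>\<^sup>+ w. of_nat (N w) \<partial>M) < \<infinity>"
    and A_nonneg: "\<And>w i. w \<in> space M \<Longrightarrow> nonneg_mat (A w i)"
    and A_nonzero: "\<And>w i. w \<in> space M \<Longrightarrow> (A w i \<noteq> 0 \<longleftrightarrow> 1 \<le> i \<and> i \<le> N w)"
    \<comment> \<open>definition of mu\<close>
    and mu_sets: "sets mu = sets borel"
    and mu_def: "\<And>S. S \<in> sets borel \<Longrightarrow>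
        emeasure mu S = (\<integral>\<^sup>+ w. of_nat (card {i\<in>{1..N w}. A w i \<in> S}) \<partial>M)
                        / (\<integral>\<^sup>+ w. of_nat (N w) \<partial>M)"
    \<comment> \<open>(C2)\<close>
    and C2_rows_cols: "\<And>a. a \<in> gen_semigroup (msupp mu) \<Longrightarrow>
        (\<forall>i. \<exists>j. a $ i $ j > 0) \<and> (\<forall>j. \<exists>i. a $ i $ j > 0)"
    and C2_pos: "\<exists>a\<in>gen_semigroup (msupp mu). pos_mat a"
    \<comment> \<open>moment condition\<close>
    and moment: "(\<integral>\<^sup>+ a. logpN a \<partial>mu) < \<infinity>"
  shows "\<forall>\<eta>>exp (lyap mu). \<forall>\<epsilon>>0. \<exists>K\<ge>1. \<exists>a::nat \<Rightarrow> real^'d^'d.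
           (\<forall>i\<in>{1..K}. a i \<in> msupp mu) \<and>
           pos_mat (mprod a 1 (K + 1)) \<and>
           opnorm1 (mprod a 1 (K + 1)) \<le> \<epsilon> * \<eta> ^ K \<and>
           spectral_radius (mprod a 1 (K + 1)) \<le> \<epsilon> * \<eta> ^ K"
proof (intro allI impI)
  fix \<eta> \<epsilon> :: real
  assume "\<eta> > exp (lyap mu)" "\<epsilon> > 0"
  have "(\<integral>\<^sup>+ w. of_nat (N w) \<partial>M) \<noteq> 0" using EN_gt1 by auto
  from iid_matrix_products_mean_measure[OF mu_sets mu_def this EN_fin A_nonneg moment]
  interpret iid_matrix_products mu .
  obtain \<theta> where \<theta>: "exp (lyap mu) < \<theta>" "\<theta> < \<eta>" using \<open>\<eta> > exp (lyap mu)\<close> dense by blast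
  then have "0 \<le> \<theta>" by (meson exp_gt_zero less_trans less_imp_le)
  obtain H where H: "H \<noteq> []" "set H \<subseteq> {a \<in> msupp mu. col_allowable a}"
      "max_colsum (mat_prod_list H) \<le> \<theta> ^ length H"
    using exists_product_le_exp_lyap[OF \<theta>(1)] by blast
  obtain g where g: "g \<in> gen_semigroup (msupp mu)" "pos_mat g" using C2_pos by blast
  obtain K a where "K \<ge> 1" "\<forall>i\<in>{1..K}. a i \<in> msupp mu" "pos_mat (mprod a 1 (K + 1))"
      and norm: "max_colsum (mprod a 1 (K + 1)) \<le> \<epsilon> * \<eta> ^ K"
    using exists_pos_product_le[OF g H \<open>0 \<le> \<theta>\<close> \<theta>(2) \<open>\<epsilon> > 0\<close>] by blast
  moreover have "opnorm1 (mprod a 1 (K + 1)) \<le> \<epsilon> * \<eta> ^ K"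
    using norm by (simp add: opnorm1_eq_max_colsum)
  moreover have "spectral_radius (mprod a 1 (K + 1)) \<le> \<epsilon> * \<eta> ^ K"
    using norm spectral_radius_le_max_colsum by (rule order_trans[rotated])
  ultimately show "\<exists>K\<ge>1. \<exists>a::nat \<Rightarrow> real^'d^'d. (\<forall>i\<in>{1..K}. a i \<in> msupp mu) \<and>
      pos_mat (mprod a 1 (K + 1)) \<and> opnorm1 (mprod a 1 (K + 1)) \<le> \<epsilon> * \<eta> ^ K \<and>
      spectral_radius (mprod a 1 (K + 1)) \<le> \<epsilon> * \<eta> ^ K"
    by blast
qed

end
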